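(* Let $L$ be a lattice with almost permutable congruences. Then $\operatorname{Con}_c L$ satisfies $\mathrm{URP}_1^-$ at every principal congruence $\Theta_L(u,v)$, $u,v\in L$.
   Context: Two congruences $\alpha,\beta$ of a lattice are almost permutable if $\alpha\vee\beta=\alpha\beta\cup\beta\alpha$, where $\alpha\beta=\{(x,y): \exists z,\ (x,z)\in\alpha,\ (z,y)\in\beta\}$; $L$ has almost permutable congruences if any two of its congruences are almost permutable. $\operatorname{Con}_c L$ is the $\{\vee,0\}$-semilattice of compact congruences of $L$, and $\Theta_L(u,v)$ is the least congruence identifying $u,v$. Let $S$ be a join-semilattice, $\varepsilon\in S$, and $\sigma=((\alpha_i,\beta_i))_{i\in I}$ a family in $S\times S$ with $\alpha_i\vee\beta_i=\varepsilon$ for all $i$. $S$ satisfies $\mathrm{URP}_1^-$ at $\sigma$ if there exist a subset $X\subseteq I$, a family $((\alpha_i^*,\beta_i^* ))_{i\in I}$ in $S\times S$ and a family $(\gamma_{i,j})_{(i,j)\in I\times I}$ in $S$ such that: (i) $\alpha_i^*\leq\alpha_i$, $\beta_i^*\leq\beta_i$, $\alpha_i^*\vee\beta_i^*=\varepsilon$ for all $i$; (ii) $\gamma_{i,j}\leq\alpha_i^*$ and $\gamma_{i,j}\leq\beta_j^*$ for all $i,j$; (iii) $\alpha_i^*\leq\alpha_j^*\vee\gamma_{i,j}$ and $\beta_j^*\leq\beta_i^*\vee\gamma_{i,j}$ for all $i,j$; (iv) $\gamma_{i,k}\leq\gamma_{i,j}\vee\gamma_{j,k}$ for all $i,j,k\in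 I$ such that ($\{i,k\}\subseteq X\Rightarrow j\in X$) and ($\{i,k\}\subseteq I\setminus X\Rightarrow j\in I\setminus X$). $S$ satisfies $\mathrm{URP}_1^-$ at $\varepsilon$ if it satisfies $\mathrm{URP}_1^-$ at every such family $\sigma$ with $\alpha_i\vee\beta_i=\varepsilon$ for all $i$. *)

theory Defs
  imports Main
begin

definition lattice_cong :: "('a::lattice \<times> 'a) set \<Rightarrow> bool" where
  "lattice_cong \<theta> \<longleftrightarrow> equiv UNIV \<theta> \<and>
     (\<forall>a b c d. (a, b) \<in> \<theta> \<and> (c, d) \<in> \<theta> \<longrightarrow>
        (sup a c, sup b d) \<in> \<theta> \<and> (inf a c, inf b d) \<in> \<theta>)"

definition Cg :: "('a::lattice \<times> 'a) set \<Rightarrow> ('a \<times> 'a) set" where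
  "Cg R = \<Inter>{\<theta>. lattice_cong \<theta> \<and> R \<subseteq> \<theta>}"

definition Theta :: "'a::lattice \<Rightarrow> 'a \<Rightarrow> ('a \<times> 'a) set" where
  "Theta u v = Cg {(u, v)}"

definition cong_join :: "('a::lattice \<times> 'a) set \<Rightarrow> ('a \<times> 'a) set \<Rightarrow> ('a \<times> 'a) set" where
  "cong_join \<alpha> \<beta> = Cg (\<alpha> \<union> \<beta>)"

definition Con_c :: "('a::lattice \<times> 'a) set set" where
  "Con_c = {\<theta>. lattice_cong \<theta> \<and>
     (\<forall>A. (\<forall>\<phi>\<in>A. lattice_cong \<phi>) \<and> \<theta> \<subseteq> Cg (\<Union>A) \<longrightarrow>
        (\<exists>B\<subseteq>A. finite B \<and> \<theta> \<subseteq> Cg (\<Union>B)))}"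

definition almost_permutable :: "('a::lattice \<times> 'a) set \<Rightarrow> ('a \<times> 'a) set \<Rightarrow> bool" where
  "almost_permutable \<alpha> \<beta> \<longleftrightarrow> cong_join \<alpha> \<beta> = (\<alpha> O \<beta>) \<union> (\<beta> O \<alpha>)"

definition has_almost_permutable_congruences :: "'a::lattice itself \<Rightarrow> bool" where
  "has_almost_permutable_congruences (_::'a itself) \<longleftrightarrow>
     (\<forall>\<alpha> \<beta> :: ('a \<times> 'a) set. lattice_cong \<alpha> \<and> lattice_cong \<beta> \<longrightarrow> almost_permutable \<alpha> \<beta>)"

text \<open>URP_1^- at a family sigma = ((alpha i, beta i))_{i in I} (with alpha i join beta i = eps)
  in a join-semilattice given by carrier S, join jn and order le: conditions (i)-(iv).\<close>
definition URP1m_at_family ::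
  "'s set \<Rightarrow> ('s \<Rightarrow> 's \<Rightarrow> 's) \<Rightarrow> ('s \<Rightarrow> 's \<Rightarrow> bool) \<Rightarrow> 's \<Rightarrow> 'i set \<Rightarrow> ('i \<Rightarrow> 's) \<Rightarrow> ('i \<Rightarrow> 's) \<Rightarrow> bool" where
  "URP1m_at_family S jn le eps I \<alpha> \<beta> \<longleftrightarrow>
     (\<exists>X \<alpha>' \<beta>' \<gamma>. X \<subseteq> I \<and>
       (\<forall>i\<in>I. \<alpha>' i \<in> S \<and> \<beta>' i \<in> S \<and> le (\<alpha>' i) (\<alpha> i) \<and> le (\<beta>' i) (\<beta> i) \<and>
               jn (\<alpha>' i) (\<beta>' i) = eps) \<and>
       (\<forall>i\<in>I. \<forall>j\<in>I. \<gamma> i j \<in> S \<and> le (\<gamma> i j) (\<alpha>' i) \<and> le (\<gamma> i j) (\<beta>' j)) \<and>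
       (\<forall>i\<in>I. \<forall>j\<in>I. le (\<alpha>' i) (jn (\<alpha>' j) (\<gamma> i j)) \<and> le (\<beta>' j) (jn (\<beta>' i) (\<gamma> i j))) \<and>
       (\<forall>i\<in>I. \<forall>j\<in>I. \<forall>k\<in>I.
          (({i, k} \<subseteq> X \<longrightarrow> j \<in> X) \<and> ({i, k} \<subseteq> I - X \<longrightarrow> j \<in> I - X)) \<longrightarrow>
          le (\<gamma> i k) (jn (\<gamma> i j) (\<gamma> j k))))"

end

theory Submission
  imports Defs
begin

(* Let a = u \<sqinter> v and b = u \<squnion> v, so that Theta u v = Theta a b.  As \<alpha>_i \<or> \<beta>_i = \<alpha>_i\<beta>_i \<union> \<beta>_i\<alpha>_i,
   the pair (a, b) is linked through some z_i by an \<alpha>_i-step and a \<beta>_i-step in one of the two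
   orders, and z_i may be taken in [a, b]; X collects the i whose chain starts with the \<alpha>_i-step.
   The congruences \<alpha>*_i and \<beta>*_i are the principal congruences of the halves [a, z_i] and [z_i, b]
   that lie in \<alpha>_i and \<beta>_i, and \<gamma>_i_j is the principal congruence of an interval cut out of [a, b]
   by z_i and z_j.  Every inclusion demanded by URP_1^- is then between principal congruences of
   subintervals of [a, b], and amounts to an implication between inequalities in the quotient
   lattice L/\<theta>, for an arbitrary congruence \<theta>. *)

unbundle lattice_syntax

lemma lattice_congI:
  assumes "\<And>x. (x, x) \<in> \<theta>"
    and "\<And>x y. (x, y) \<in> \<theta> \<Longrightarrow> (y, x) \<in> \<theta>"
    and "\<And>x y z. (x, y) \<in> \<theta> \<Longrightarrow> (y, z) \<in> \<theta> \<Longrightarrow> (x, z) \<in> \<theta>"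
    and "\<And>a b c d. (a, b) \<in> \<theta> \<Longrightarrow> (c, d) \<in> \<theta> \<Longrightarrow> (a \<squnion> c, b \<squnion> d) \<in> \<theta>"
    and "\<And>a b c d. (a, b) \<in> \<theta> \<Longrightarrow> (c, d) \<in> \<theta> \<Longrightarrow> (a \<sqinter> c, b \<sqinter> d) \<in> \<theta>"
  shows "lattice_cong \<theta>"
  unfolding lattice_cong_def equiv_def
proof (intro conjI allI impI)
  show "refl_on UNIV \<theta>" by (rule refl_onI) (simp_all add: assms(1))
  show "sym \<theta>" by (rule symI) (rule assms(2))
  show "trans \<theta>" by (rule transI) (rule assms(3))
qed (auto intro: assms(4,5))

(* x \<le> y in the quotient lattice L/\<theta>. *)
definition cong_le :: "('a::lattice \<times> 'a) set \<Rightarrow> 'a \<Rightarrow> 'a \<Rightarrow> bool" where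
  "cong_le \<theta> x y \<longleftrightarrow> (x, x \<sqinter> y) \<in> \<theta>"

context
  fixes \<theta> :: "('a::lattice \<times> 'a) set"
  assumes cong: "lattice_cong \<theta>"
begin

lemma lattice_cong_refl: "(x, x) \<in> \<theta>"
  using cong unfolding lattice_cong_def equiv_def refl_on_def by blast

lemma lattice_cong_sym: "(x, y) \<in> \<theta> \<Longrightarrow> (y, x) \<in> \<theta>"
  using cong unfolding lattice_cong_def equiv_def sym_def by blast

lemma lattice_cong_trans: "(x, y) \<in> \<theta> \<Longrightarrow> (y, z) \<in> \<theta> \<Longrightarrow> (x, z) \<in> \<theta>"
  using cong unfolding lattice_cong_def equiv_def trans_def by blast

lemma lattice_cong_sup: "(a, b) \<in> \<theta> \<Longrightarrow> (c, d) \<in> \<theta> \<Longrightarrow> (a \<squnion> c, b \<squnion> d) \<in> \<theta>"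
  using cong unfolding lattice_cong_def by blast

lemma lattice_cong_inf: "(a, b) \<in> \<theta> \<Longrightarrow> (c, d) \<in> \<theta> \<Longrightarrow> (a \<sqinter> c, b \<sqinter> d) \<in> \<theta>"
  using cong unfolding lattice_cong_def by blast

lemma lattice_cong_inf_left: "(x, y) \<in> \<theta> \<Longrightarrow> (c \<sqinter> x, c \<sqinter> y) \<in> \<theta>"
  by (rule lattice_cong_inf[OF lattice_cong_refl])

lemma lattice_cong_sup_left: "(x, y) \<in> \<theta> \<Longrightarrow> (c \<squnion> x, c \<squnion> y) \<in> \<theta>"
  by (rule lattice_cong_sup[OF lattice_cong_refl])

lemma cong_le_of_le: "x \<le> y \<Longrightarrow> cong_le \<theta> x y"
  unfolding cong_le_def by (simp add: inf_absorb1 lattice_cong_refl)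

lemma cong_le_iff_sup: "cong_le \<theta> x y \<longleftrightarrow> (y, x \<squnion> y) \<in> \<theta>"
proof
  assume "cong_le \<theta> x y"
  then have "(y \<squnion> x, y \<squnion> (x \<sqinter> y)) \<in> \<theta>"
    unfolding cong_le_def by (rule lattice_cong_sup_left)
  then show "(y, x \<squnion> y) \<in> \<theta>"
    by (auto simp: sup_commute sup_absorb1 intro: lattice_cong_sym)
next
  assume "(y, x \<squnion> y) \<in> \<theta>"
  then have "(x \<sqinter> y, x \<sqinter> (x \<squnion> y)) \<in> \<theta>" by (rule lattice_cong_inf_left)
  then show "cong_le \<theta> x y"
    unfolding cong_le_def by (simp add: lattice_cong_sym)
qed

lemma lattice_cong_iff_cong_le: "(x, y) \<in> \<theta> \<longleftrightarrow> cong_le \<theta> x y \<and> cong_le \<theta> y x"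
proof
  assume xy: "(x, y) \<in> \<theta>"
  have "(x \<sqinter> x, x \<sqinter> y) \<in> \<theta>" "(y \<sqinter> x, y \<sqinter> y) \<in> \<theta>"
    by (rule lattice_cong_inf_left[OF xy])+
  then show "cong_le \<theta> x y \<and> cong_le \<theta> y x"
    unfolding cong_le_def by (simp add: lattice_cong_sym)
next
  assume "cong_le \<theta> x y \<and> cong_le \<theta> y x"
  then have "(x, x \<sqinter> y) \<in> \<theta>" "(x \<sqinter> y, y) \<in> \<theta>"
    unfolding cong_le_def by (auto simp: inf_commute intro: lattice_cong_sym)
  then show "(x, y) \<in> \<theta>" by (rule lattice_cong_trans)
qed

lemma lattice_cong_iff_cong_le_ordered: "p \<le> q \<Longrightarrow> (p, q) \<in> \<theta> \<longleftrightarrow> cong_le \<theta> q p"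
  by (simp add: lattice_cong_iff_cong_le cong_le_of_le)

lemma cong_le_trans:
  assumes "cong_le \<theta> x y" and "cong_le \<theta> y w"
  shows "cong_le \<theta> x w"
proof -
  have "(x \<sqinter> y, x \<sqinter> (y \<sqinter> w)) \<in> \<theta>"
    using assms(2) unfolding cong_le_def by (rule lattice_cong_inf_left)
  with assms(1) have xyw: "(x, x \<sqinter> y \<sqinter> w) \<in> \<theta>"
    unfolding cong_le_def by (simp add: inf_assoc lattice_cong_trans)
  then have "(w \<sqinter> x, w \<sqinter> (x \<sqinter> y \<sqinter> w)) \<in> \<theta>" by (rule lattice_cong_inf_left)
  then have "(x \<sqinter> w, x \<sqinter> y \<sqinter> w) \<in> \<theta>" by (simp add: inf_aci)
  with xyw show ?thesis
    unfolding cong_le_def by (blast intro: lattice_cong_trans lattice_cong_sym)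
qed

lemma cong_le_inf_iff: "cong_le \<theta> x (y \<sqinter> w) \<longleftrightarrow> cong_le \<theta> x y \<and> cong_le \<theta> x w"
proof
  assume "cong_le \<theta> x (y \<sqinter> w)"
  then show "cong_le \<theta> x y \<and> cong_le \<theta> x w"
    by (meson cong_le_trans cong_le_of_le inf_le1 inf_le2)
next
  assume "cong_le \<theta> x y \<and> cong_le \<theta> x w"
  then have xy: "(x, x \<sqinter> y) \<in> \<theta>" and xw: "(x, x \<sqinter> w) \<in> \<theta>"
    unfolding cong_le_def by auto
  have "((x \<sqinter> y) \<sqinter> x, (x \<sqinter> y) \<sqinter> (x \<sqinter> w)) \<in> \<theta>" by (rule lattice_cong_inf_left[OF xw])
  with xy show "cong_le \<theta> x (y \<sqinter> w)"
    unfolding cong_le_def by (simp add: inf_aci lattice_cong_trans)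
qed

lemma cong_le_sup_iff: "cong_le \<theta> (x \<squnion> y) w \<longleftrightarrow> cong_le \<theta> x w \<and> cong_le \<theta> y w"
proof
  assume "cong_le \<theta> (x \<squnion> y) w"
  then show "cong_le \<theta> x w \<and> cong_le \<theta> y w"
    by (meson cong_le_trans cong_le_of_le sup_ge1 sup_ge2)
next
  assume "cong_le \<theta> x w \<and> cong_le \<theta> y w"
  then have xw: "(w, x \<squnion> w) \<in> \<theta>" and yw: "(w, y \<squnion> w) \<in> \<theta>"
    unfolding cong_le_iff_sup by auto
  have "((x \<squnion> w) \<squnion> w, (x \<squnion> w) \<squnion> (y \<squnion> w)) \<in> \<theta>" by (rule lattice_cong_sup_left[OF yw])
  with xw show "cong_le \<theta> (x \<squnion> y) w"
    unfolding cong_le_iff_sup by (simp add: sup_aci lattice_cong_trans)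
qed

end

lemma Cg_lattice_cong: "lattice_cong (Cg R)"
proof (rule lattice_congI)
  have Cg_iff: "(x, y) \<in> Cg R \<longleftrightarrow> (\<forall>\<theta>. lattice_cong \<theta> \<and> R \<subseteq> \<theta> \<longrightarrow> (x, y) \<in> \<theta>)" for x y
    unfolding Cg_def by blast
  show "(x, x) \<in> Cg R" for x
    unfolding Cg_iff by (blast intro: lattice_cong_refl)
  show "(y, x) \<in> Cg R" if "(x, y) \<in> Cg R" for x y
    using that unfolding Cg_iff by (blast intro: lattice_cong_sym)
  show "(x, z) \<in> Cg R" if "(x, y) \<in> Cg R" "(y, z) \<in> Cg R" for x y z
    using that unfolding Cg_iff by (blast intro: lattice_cong_trans)
  show "(a \<squnion> c, b \<squnion> d) \<in> Cg R" if "(a, b) \<in> Cg R" "(c, d) \<in> Cg R" for a b c d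
    using that unfolding Cg_iff by (blast intro: lattice_cong_sup)
  show "(a \<sqinter> c, b \<sqinter> d) \<in> Cg R" if "(a, b) \<in> Cg R" "(c, d) \<in> Cg R" for a b c d
    using that unfolding Cg_iff by (blast intro: lattice_cong_inf)
qed

lemma Cg_upper: "R \<subseteq> Cg R"
  unfolding Cg_def by (rule Inter_greatest) simp

lemma Cg_least: "lattice_cong \<theta> \<Longrightarrow> R \<subseteq> \<theta> \<Longrightarrow> Cg R \<subseteq> \<theta>"
  unfolding Cg_def by (rule Inter_lower) simp

lemma Cg_mono: "R \<subseteq> R' \<Longrightarrow> Cg R \<subseteq> Cg R'"
  unfolding Cg_def by (rule Inter_anti_mono) blast

lemma Theta_lattice_cong: "lattice_cong (Theta p q)"
  unfolding Theta_def by (rule Cg_lattice_cong)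

lemma pair_in_Theta: "(p, q) \<in> Theta p q"
  unfolding Theta_def using Cg_upper by blast

lemma Theta_subset_iff: "lattice_cong \<theta> \<Longrightarrow> Theta p q \<subseteq> \<theta> \<longleftrightarrow> (p, q) \<in> \<theta>"
  unfolding Theta_def using Cg_least Cg_upper by blast

lemma cong_join_lattice_cong: "lattice_cong (cong_join \<alpha> \<beta>)"
  unfolding cong_join_def by (rule Cg_lattice_cong)

lemma cong_join_upper1: "\<alpha> \<subseteq> cong_join \<alpha> \<beta>"
  and cong_join_upper2: "\<beta> \<subseteq> cong_join \<alpha> \<beta>"
  unfolding cong_join_def using Cg_upper[of "\<alpha> \<union> \<beta>"] by auto

lemma cong_join_least: "lattice_cong \<theta> \<Longrightarrow> \<alpha> \<subseteq> \<theta> \<Longrightarrow> \<beta> \<subseteq> \<theta> \<Longrightarrow> cong_join \<alpha> \<beta> \<subseteq> \<theta>"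
  unfolding cong_join_def by (rule Cg_least) auto

lemma cong_join_commute: "cong_join \<alpha> \<beta> = cong_join \<beta> \<alpha>"
  unfolding cong_join_def by (simp add: Un_commute)

lemma Theta_subset_Theta:
  assumes "\<And>\<theta>. lattice_cong \<theta> \<Longrightarrow> (r, s) \<in> \<theta> \<Longrightarrow> (p, q) \<in> \<theta>"
  shows "Theta p q \<subseteq> Theta r s"
  by (simp add: Theta_subset_iff Theta_lattice_cong assms pair_in_Theta)

lemma Theta_subset_cong_join:
  assumes "\<And>\<theta>. lattice_cong \<theta> \<Longrightarrow> (r, s) \<in> \<theta> \<Longrightarrow> (t, w) \<in> \<theta> \<Longrightarrow> (p, q) \<in> \<theta>"
  shows "Theta p q \<subseteq> cong_join (Theta r s) (Theta t w)"
proof -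
  let ?\<theta> = "cong_join (Theta r s) (Theta t w)"
  have "(r, s) \<in> ?\<theta>" "(t, w) \<in> ?\<theta>"
    by (rule subsetD[OF cong_join_upper1 pair_in_Theta], rule subsetD[OF cong_join_upper2 pair_in_Theta])
  then show ?thesis by (simp add: Theta_subset_iff cong_join_lattice_cong assms)
qed

lemma lattice_cong_Union_directed:
  assumes "F \<noteq> {}" and cong: "\<And>\<theta>. \<theta> \<in> F \<Longrightarrow> lattice_cong \<theta>"
    and directed: "\<And>\<theta>\<^sub>1 \<theta>\<^sub>2. \<theta>\<^sub>1 \<in> F \<Longrightarrow> \<theta>\<^sub>2 \<in> F \<Longrightarrow> \<exists>\<theta>\<in>F. \<theta>\<^sub>1 \<union> \<theta>\<^sub>2 \<subseteq> \<theta>"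
  shows "lattice_cong (\<Union>F)"
proof (rule lattice_congI)
  have common: "\<exists>\<theta>\<in>F. p \<in> \<theta> \<and> q \<in> \<theta>" if "p \<in> \<Union>F" "q \<in> \<Union>F" for p q
  proof -
    from that obtain \<theta>\<^sub>1 \<theta>\<^sub>2 where "\<theta>\<^sub>1 \<in> F" "\<theta>\<^sub>2 \<in> F" "p \<in> \<theta>\<^sub>1" "q \<in> \<theta>\<^sub>2"
      by (elim UnionE)
    moreover from directed[OF this(1,2)] obtain \<theta> where "\<theta> \<in> F" "\<theta>\<^sub>1 \<union> \<theta>\<^sub>2 \<subseteq> \<theta>" ..
    ultimately show ?thesis by blast
  qed
  show "(x, x) \<in> \<Union>F" for x
  proof -
    from \<open>F \<noteq> {}\<close> obtain \<theta> where "\<theta> \<in> F" by blast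
    then show ?thesis using lattice_cong_refl[OF cong] by blast
  qed
  show "(y, x) \<in> \<Union>F" if "(x, y) \<in> \<Union>F" for x y
    using that
  proof
    fix \<theta> assume "(x, y) \<in> \<theta>" "\<theta> \<in> F"
    then show ?thesis using lattice_cong_sym[OF cong] by blast
  qed
  show "(x, z) \<in> \<Union>F" if "(x, y) \<in> \<Union>F" "(y, z) \<in> \<Union>F" for x y z
    using common[OF that] lattice_cong_trans[OF cong] by blast
  show "(a \<squnion> c, b \<squnion> d) \<in> \<Union>F" "(a \<sqinter> c, b \<sqinter> d) \<in> \<Union>F"
    if "(a, b) \<in> \<Union>F" "(c, d) \<in> \<Union>F" for a b c d
    using common[OF that] lattice_cong_sup[OF cong] lattice_cong_inf[OF cong] by blast+
qed

lemma Theta_in_Con_c: "Theta p q \<in> Con_c"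
  unfolding Con_c_def
proof (intro CollectI conjI allI impI)
  show "lattice_cong (Theta p q)" by (rule Theta_lattice_cong)
  fix A :: "('a \<times> 'a) set set"
  assume "(\<forall>\<phi>\<in>A. lattice_cong \<phi>) \<and> Theta p q \<subseteq> Cg (\<Union>A)"
  then have pq: "(p, q) \<in> Cg (\<Union>A)" using pair_in_Theta by blast
  define F where "F = {Cg (\<Union>B) | B. B \<subseteq> A \<and> finite B}"
  have "lattice_cong (\<Union>F)"
  proof (rule lattice_cong_Union_directed)
    show "F \<noteq> {}" unfolding F_def by blast
    show "lattice_cong \<theta>" if "\<theta> \<in> F" for \<theta>
      using that unfolding F_def by (auto simp: Cg_lattice_cong)
    fix \<theta>\<^sub>1 \<theta>\<^sub>2 assume "\<theta>\<^sub>1 \<in> F" "\<theta>\<^sub>2 \<in> F"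
    then obtain B\<^sub>1 B\<^sub>2 where "\<theta>\<^sub>1 = Cg (\<Union>B\<^sub>1)" "\<theta>\<^sub>2 = Cg (\<Union>B\<^sub>2)"
      and "B\<^sub>1 \<union> B\<^sub>2 \<subseteq> A" "finite (B\<^sub>1 \<union> B\<^sub>2)" unfolding F_def by blast
    moreover have "Cg (\<Union>B\<^sub>1) \<union> Cg (\<Union>B\<^sub>2) \<subseteq> Cg (\<Union>(B\<^sub>1 \<union> B\<^sub>2))"
      by (intro Un_least Cg_mono) auto
    ultimately show "\<exists>\<theta>\<in>F. \<theta>\<^sub>1 \<union> \<theta>\<^sub>2 \<subseteq> \<theta>"
      unfolding F_def by blast
  qed
  moreover have "\<Union>A \<subseteq> \<Union>F"
  proof
    fix x assume "x \<in> \<Union>A"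
    then obtain \<phi> where "\<phi> \<in> A" "x \<in> \<phi>" by (rule UnionE)
    moreover have "\<phi> \<subseteq> Cg (\<Union>{\<phi>})" using Cg_upper by simp
    ultimately show "x \<in> \<Union>F" unfolding F_def by blast
  qed
  ultimately have "Cg (\<Union>A) \<subseteq> \<Union>F" by (rule Cg_least)
  with pq have "(p, q) \<in> \<Union>F" by blast
  then obtain B where "B \<subseteq> A" "finite B" "(p, q) \<in> Cg (\<Union>B)"
    unfolding F_def by blast
  then show "\<exists>B\<subseteq>A. finite B \<and> Theta p q \<subseteq> Cg (\<Union>B)"
    by (auto simp: Theta_subset_iff Cg_lattice_cong)
qed

lemma Con_c_lattice_cong: "\<theta> \<in> Con_c \<Longrightarrow> lattice_cong \<theta>"
  unfolding Con_c_def by simp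

lemma Theta_inf_sup: "Theta u v = Theta (u \<sqinter> v) (u \<squnion> v)"
  by (intro equalityI Theta_subset_Theta)
    (simp_all add: lattice_cong_iff_cong_le lattice_cong_iff_cong_le_ordered le_supI1
      cong_le_sup_iff cong_le_inf_iff cong_le_of_le)

lemma cong_join_Theta_interval:
  assumes "a \<le> z" "z \<le> b"
  shows "cong_join (Theta a z) (Theta z b) = Theta a b"
proof
  show "cong_join (Theta a z) (Theta z b) \<subseteq> Theta a b"
    using assms
    by (intro cong_join_least Theta_lattice_cong Theta_subset_Theta)
      (auto simp: lattice_cong_iff_cong_le_ordered intro: cong_le_trans cong_le_of_le)
  show "Theta a b \<subseteq> cong_join (Theta a z) (Theta z b)"
    by (rule Theta_subset_cong_join) (rule lattice_cong_trans)
qed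

lemma relcomp_interval_witness:
  assumes "lattice_cong \<alpha>" "lattice_cong \<beta>" "(a, b) \<in> \<alpha> O \<beta>" "a \<le> b"
  shows "\<exists>z. a \<le> z \<and> z \<le> b \<and> (a, z) \<in> \<alpha> \<and> (z, b) \<in> \<beta>"
proof -
  from assms(3) obtain w where "(a, w) \<in> \<alpha>" "(w, b) \<in> \<beta>" by blast
  \<comment> \<open>the polynomial x \<mapsto> (x \<squnion> a) \<sqinter> b fixes a and b and maps into [a, b]\<close>
  then have "((a \<squnion> a) \<sqinter> b, (w \<squnion> a) \<sqinter> b) \<in> \<alpha>" "((w \<squnion> a) \<sqinter> b, (b \<squnion> a) \<sqinter> b) \<in> \<beta>"
    using assms(1,2) by (blast intro: lattice_cong_inf lattice_cong_sup lattice_cong_refl)+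
  with assms(4) show ?thesis
    by (intro exI[of _ "(w \<squnion> a) \<sqinter> b"]) (simp add: inf_absorb1 sup_absorb1)
qed

lemma almost_permutable_interval_witness:
  assumes "almost_permutable \<alpha> \<beta>" "lattice_cong \<alpha>" "lattice_cong \<beta>"
    and "(a, b) \<in> cong_join \<alpha> \<beta>" "a \<le> b"
  shows "\<exists>z. a \<le> z \<and> z \<le> b \<and> ((a, z) \<in> \<alpha> \<and> (z, b) \<in> \<beta> \<or> (a, z) \<in> \<beta> \<and> (z, b) \<in> \<alpha>)"
proof -
  from assms(1,4) have "(a, b) \<in> \<alpha> O \<beta> \<or> (a, b) \<in> \<beta> O \<alpha>"
    unfolding almost_permutable_def by blast
  then show ?thesis
    using relcomp_interval_witness[OF assms(2,3) _ assms(5)]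
      relcomp_interval_witness[OF assms(3,2) _ assms(5)] by blast
qed

locale interval_points =
  fixes a b :: "'a::lattice" and I X :: "'i set" and z :: "'i \<Rightarrow> 'a"
  assumes z_lower: "i \<in> I \<Longrightarrow> a \<le> z i" and z_upper: "i \<in> I \<Longrightarrow> z i \<le> b"
begin

definition alpha_star :: "'i \<Rightarrow> ('a \<times> 'a) set" where
  "alpha_star i = (if i \<in> X then Theta a (z i) else Theta (z i) b)"

definition beta_star :: "'i \<Rightarrow> ('a \<times> 'a) set" where
  "beta_star i = (if i \<in> X then Theta (z i) b else Theta a (z i))"

definition gamma :: "'i \<Rightarrow> 'i \<Rightarrow> ('a \<times> 'a) set" where
  "gamma i j =
    (if i \<in> X then if j \<in> X then Theta (z i \<sqinter> z j) (z i) else Theta a (z i \<sqinter> z j)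
     else if j \<in> X then Theta (z i \<squnion> z j) b else Theta (z i) (z i \<squnion> z j))"

lemma principal_in_Con_c: "alpha_star i \<in> Con_c" "beta_star i \<in> Con_c" "gamma i j \<in> Con_c"
  by (simp_all add: alpha_star_def beta_star_def gamma_def Theta_in_Con_c)

lemma alpha_star_join_beta_star: "i \<in> I \<Longrightarrow> cong_join (alpha_star i) (beta_star i) = Theta a b"
  by (simp add: alpha_star_def beta_star_def cong_join_Theta_interval z_lower z_upper cong_join_commute)

text \<open>Each inclusion below is checked in an arbitrary congruence \<theta>: as all intervals involved lie
  in [a, b], membership of their endpoints in \<theta> becomes an inequality of \<open>cong_le \<theta>\<close>; meets on the
  right and joins on the left are split off, and the remaining inequalities follow by transitivity.\<close>

lemmas quotient_order_simps = lattice_cong_iff_cong_le_ordered cong_le_inf_iff cong_le_sup_iff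
  cong_le_of_le z_lower z_upper le_infI1 le_infI2 le_supI1 le_supI2

lemmas quotient_order_rules = cong_le_trans cong_le_of_le cong_le_inf_iff cong_le_sup_iff
  z_lower z_upper order_refl inf_le1 inf_le2 sup_ge1 sup_ge2

lemma gamma_subset_alpha_star: "i \<in> I \<Longrightarrow> j \<in> I \<Longrightarrow> gamma i j \<subseteq> alpha_star i"
  unfolding gamma_def alpha_star_def
  by (auto intro!: Theta_subset_Theta simp: quotient_order_simps)
    (meson quotient_order_rules)+

lemma gamma_subset_beta_star: "i \<in> I \<Longrightarrow> j \<in> I \<Longrightarrow> gamma i j \<subseteq> beta_star j"
  unfolding gamma_def beta_star_def
  by (auto intro!: Theta_subset_Theta simp: quotient_order_simps)
    (meson quotient_order_rules)+

lemma alpha_star_subset_join_gamma: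
  "i \<in> I \<Longrightarrow> j \<in> I \<Longrightarrow> alpha_star i \<subseteq> cong_join (alpha_star j) (gamma i j)"
  unfolding gamma_def alpha_star_def
  by (auto intro!: Theta_subset_cong_join simp: quotient_order_simps)
    (meson quotient_order_rules)+

lemma beta_star_subset_join_gamma:
  "i \<in> I \<Longrightarrow> j \<in> I \<Longrightarrow> beta_star j \<subseteq> cong_join (beta_star i) (gamma i j)"
  unfolding gamma_def beta_star_def
  by (auto intro!: Theta_subset_cong_join simp: quotient_order_simps)
    (meson quotient_order_rules)+

lemma gamma_subset_join_gamma:
  assumes "i \<in> I" "j \<in> I" "k \<in> I"
    and "({i, k} \<subseteq> X \<longrightarrow> j \<in> X) \<and> ({i, k} \<subseteq> I - X \<longrightarrow> j \<in> I - X)"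
  shows "gamma i k \<subseteq> cong_join (gamma i j) (gamma j k)"
  using assms unfolding gamma_def
  by (auto intro!: Theta_subset_cong_join simp: quotient_order_simps)
    (meson quotient_order_rules)+

end

theorem theorem2p4:
  fixes u v :: "'a::lattice" and I :: "'i set"
    and \<alpha> \<beta> :: "'i \<Rightarrow> ('a \<times> 'a) set"
  assumes "has_almost_permutable_congruences TYPE('a)"
    and "\<forall>i\<in>I. \<alpha> i \<in> Con_c \<and> \<beta> i \<in> Con_c \<and> cong_join (\<alpha> i) (\<beta> i) = Theta u v"
  shows "URP1m_at_family Con_c cong_join (\<subseteq>) (Theta u v) I \<alpha> \<beta>"
proof -
  define a b where "a = u \<sqinter> v" and "b = u \<squnion> v"
  have "a \<le> b" and Theta_uv: "Theta u v = Theta a b"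
    unfolding a_def b_def by (simp add: le_supI1, rule Theta_inf_sup)
  have cong: "lattice_cong (\<alpha> i)" "lattice_cong (\<beta> i)" if "i \<in> I" for i
    using assms(2) that by (auto intro: Con_c_lattice_cong)
  have "\<forall>i\<in>I. \<exists>z. a \<le> z \<and> z \<le> b \<and>
      ((a, z) \<in> \<alpha> i \<and> (z, b) \<in> \<beta> i \<or> (a, z) \<in> \<beta> i \<and> (z, b) \<in> \<alpha> i)"
    using assms cong \<open>a \<le> b\<close> pair_in_Theta[of a b] unfolding Theta_uv
    by (auto simp: has_almost_permutable_congruences_def intro!: almost_permutable_interval_witness)
  then obtain z where z: "\<And>i. i \<in> I \<Longrightarrow> a \<le> z i \<and> z i \<le> b \<and>
      ((a, z i) \<in> \<alpha> i \<and> (z i, b) \<in> \<beta> i \<or> (a, z i) \<in> \<beta> i \<and> (z i, b) \<in> \<alpha> i)"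
    by metis
  define X where "X = {i \<in> I. (a, z i) \<in> \<alpha> i \<and> (z i, b) \<in> \<beta> i}"
  interpret interval_points a b I X z
    using z by unfold_locales auto
  have "X \<subseteq> I" unfolding X_def by blast
  moreover have "alpha_star i \<subseteq> \<alpha> i \<and> beta_star i \<subseteq> \<beta> i" if "i \<in> I" for i
    using that z[OF that] cong[OF that] unfolding alpha_star_def beta_star_def
    by (auto simp: X_def Theta_subset_iff)
  ultimately show ?thesis
    unfolding URP1m_at_family_def Theta_uv
    by (intro exI[of _ X] exI[of _ alpha_star] exI[of _ beta_star] exI[of _ gamma])
      (simp add: principal_in_Con_c alpha_star_join_beta_star gamma_subset_alpha_star
        gamma_subset_beta_star alpha_star_subset_join_gamma beta_star_subset_join_gamma
        gamma_subset_join_gamma)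
qed

end
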